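(* Let three binary classifiers $i,j,k$ label a test with $Q_a,Q_b\ge1$, and let $\alpha x^2-\alpha x+\gamma$ be the prevalence quadratic built from their observed decision frequencies (as in the context). If the classifiers are error independent on the test and this quadratic is not identically zero, then both of its roots are rational numbers (indeed they are $p_a$ and $p_b$). Equivalently, if the prevalence quadratic is not identically zero and has an irrational (or non-real) root, then at least one pair or 3-way error correlation $\Gamma_{c,d;\ell}$ or $\Gamma_{i,j,k;\ell}$ is nonzero.
   Context: Test of $Q$ items with true labels $t_q\in\{a,b\}$; $Q_\ell=\#\{q:t_q=\ell\}$, $p_\ell=Q_\ell/Q$. Classifier $c\in\{i,j,k\}$ labels item $q$ with $\ell^q_c\in\{a,b\}$; label accuracy $p_{c,\ell}=\frac1{Q_\ell}\#\{q:\ell^q_c=\ell,t_q=\ell\}$. $f_{\ell_i\ell_j\ell_k}=\frac1Q\#\{q:\ell^q_i=\ell_i,\ell^q_j=\ell_j,\ell^q_k=\ell_k\}$. Define $f_{b_i}=f_{baa}+f_{bab}+f_{bba}+f_{bbb}$, $f_{b_j}=f_{aba}+f_{abb}+f_{bba}+f_{bbb}$, $f_{b_k}=f_{aab}+f_{abb}+f_{bab}+f_{bbb}$, $\Delta_{i,j}=f_{bba}+f_{bbb}-f_{b_i}f_{b_j}$, $\Delta_{i,k}=f_{bab}+f_{bbb}-f_{b_i}f_{b_k}$, $\Delta_{j,k}=f_{abb}+f_{bbb}-f_{b_j}f_{b_k}$, $\Delta_{i,j,k}=f_{bbb}-(f_{b_i}f_{b_j}f_{b_k}+f_{b_i}\Delta_{j,k}+f_{b_j}\Delta_{i,k}+f_{b_k}\Delta_{i,j})$,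 $\alpha=\Delta_{i,j,k}^2+4\Delta_{i,j}\Delta_{i,k}\Delta_{j,k}$, $\gamma=\Delta_{i,j}\Delta_{i,k}\Delta_{j,k}$. Pair error correlation $\Gamma_{c,d;\ell}=\frac1{Q_\ell}\sum_q(\mathbf 1[\ell^q_c=\ell]-p_{c,\ell})(\mathbf 1[\ell^q_d=\ell]-p_{d,\ell})\mathbf 1[t_q=\ell]$; 3-way error correlation $\Gamma_{i,j,k;\ell}=\frac1{Q_\ell}\sum_q\prod_{c\in\{i,j,k\}}(\mathbf 1[\ell^q_c=\ell]-p_{c,\ell})\,\mathbf 1[t_q=\ell]$. Error independence means all pair and 3-way correlations vanish for both labels $\ell\in\{a,b\}$. *)

theory Defs
  imports Complex_Main
begin

datatype lbl = La | Lb
datatype clf = Ci | Cj | Ck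

text \<open>A test of Q items indexed by 0..Q-1; t q is the true label of item q;
  L c q is the label classifier c assigns to item q.\<close>

definition ind :: "bool \<Rightarrow> real" where
  "ind b = (if b then 1 else 0)"

definition Qcnt :: "nat \<Rightarrow> (nat \<Rightarrow> lbl) \<Rightarrow> lbl \<Rightarrow> nat" where
  "Qcnt Q t l = card {q. q < Q \<and> t q = l}"

definition prev :: "nat \<Rightarrow> (nat \<Rightarrow> lbl) \<Rightarrow> lbl \<Rightarrow> real" where
  "prev Q t l = real (Qcnt Q t l) / real Q"

definition acc :: "nat \<Rightarrow> (nat \<Rightarrow> lbl) \<Rightarrow> (clf \<Rightarrow> nat \<Rightarrow> lbl) \<Rightarrow> clf \<Rightarrow> lbl \<Rightarrow> real" where
  "acc Q t L c l = real (card {q. q < Q \<and> L c q = l \<and> t q = l}) / real (Qcnt Q t l)"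

definition freq :: "nat \<Rightarrow> (clf \<Rightarrow> nat \<Rightarrow> lbl) \<Rightarrow> lbl \<Rightarrow> lbl \<Rightarrow> lbl \<Rightarrow> real" where
  "freq Q L x y z = real (card {q. q < Q \<and> L Ci q = x \<and> L Cj q = y \<and> L Ck q = z}) / real Q"

definition Gamma2 :: "nat \<Rightarrow> (nat \<Rightarrow> lbl) \<Rightarrow> (clf \<Rightarrow> nat \<Rightarrow> lbl) \<Rightarrow> clf \<Rightarrow> clf \<Rightarrow> lbl \<Rightarrow> real" where
  "Gamma2 Q t L c d l = (1 / real (Qcnt Q t l)) *
     (\<Sum>q<Q. (ind (L c q = l) - acc Q t L c l) * (ind (L d q = l) - acc Q t L d l) * ind (t q = l))"

definition Gamma3 :: "nat \<Rightarrow> (nat \<Rightarrow> lbl) \<Rightarrow> (clf \<Rightarrow> nat \<Rightarrow> lbl) \<Rightarrow> lbl \<Rightarrow> real" where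
  "Gamma3 Q t L l = (1 / real (Qcnt Q t l)) *
     (\<Sum>q<Q. (ind (L Ci q = l) - acc Q t L Ci l) * (ind (L Cj q = l) - acc Q t L Cj l)
            * (ind (L Ck q = l) - acc Q t L Ck l) * ind (t q = l))"

definition error_independent :: "nat \<Rightarrow> (nat \<Rightarrow> lbl) \<Rightarrow> (clf \<Rightarrow> nat \<Rightarrow> lbl) \<Rightarrow> bool" where
  "error_independent Q t L \<longleftrightarrow>
     (\<forall>l c d. c \<noteq> d \<longrightarrow> Gamma2 Q t L c d l = 0) \<and> (\<forall>l. Gamma3 Q t L l = 0)"

definition fbi :: "nat \<Rightarrow> (clf \<Rightarrow> nat \<Rightarrow> lbl) \<Rightarrow> real" where
  "fbi Q L = freq Q L Lb La La + freq Q L Lb La Lb + freq Q L Lb Lb La + freq Q L Lb Lb Lb"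
definition fbj :: "nat \<Rightarrow> (clf \<Rightarrow> nat \<Rightarrow> lbl) \<Rightarrow> real" where
  "fbj Q L = freq Q L La Lb La + freq Q L La Lb Lb + freq Q L Lb Lb La + freq Q L Lb Lb Lb"
definition fbk :: "nat \<Rightarrow> (clf \<Rightarrow> nat \<Rightarrow> lbl) \<Rightarrow> real" where
  "fbk Q L = freq Q L La La Lb + freq Q L La Lb Lb + freq Q L Lb La Lb + freq Q L Lb Lb Lb"

definition Dij :: "nat \<Rightarrow> (clf \<Rightarrow> nat \<Rightarrow> lbl) \<Rightarrow> real" where
  "Dij Q L = freq Q L Lb Lb La + freq Q L Lb Lb Lb - fbi Q L * fbj Q L"
definition Dik :: "nat \<Rightarrow> (clf \<Rightarrow> nat \<Rightarrow> lbl) \<Rightarrow> real" where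
  "Dik Q L = freq Q L Lb La Lb + freq Q L Lb Lb Lb - fbi Q L * fbk Q L"
definition Djk :: "nat \<Rightarrow> (clf \<Rightarrow> nat \<Rightarrow> lbl) \<Rightarrow> real" where
  "Djk Q L = freq Q L La Lb Lb + freq Q L Lb Lb Lb - fbj Q L * fbk Q L"
definition Dijk :: "nat \<Rightarrow> (clf \<Rightarrow> nat \<Rightarrow> lbl) \<Rightarrow> real" where
  "Dijk Q L = freq Q L Lb Lb Lb - (fbi Q L * fbj Q L * fbk Q L + fbi Q L * Djk Q L
      + fbj Q L * Dik Q L + fbk Q L * Dij Q L)"

definition alpha :: "nat \<Rightarrow> (clf \<Rightarrow> nat \<Rightarrow> lbl) \<Rightarrow> real" where
  "alpha Q L = (Dijk Q L)^2 + 4 * Dij Q L * Dik Q L * Djk Q L"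
definition gamma :: "nat \<Rightarrow> (clf \<Rightarrow> nat \<Rightarrow> lbl) \<Rightarrow> real" where
  "gamma Q L = Dij Q L * Dik Q L * Djk Q L"

end

theory Submission
  imports Defs
begin

text \<open>Within each true label, error independence says that the three b-vote indicators are
  uncorrelated, so all their joint moments factor. The observed decision frequencies are
  therefore those of a two-component mixture of product distributions with weights
  \<open>p\<^sub>a, p\<^sub>b\<close>, and for such a mixture every \<open>\<Delta>\<close> is a multiple of \<open>p\<^sub>a p\<^sub>b\<close> times a product of
  differences of the within-label rates. This yields \<open>\<gamma> = p\<^sub>a p\<^sub>b \<alpha>\<close>, so the prevalence quadratic
  is \<open>\<alpha> (x - p\<^sub>a) (x - p\<^sub>b)\<close>, whose roots are the rationals \<open>Q\<^sub>a/Q, Q\<^sub>b/Q\<close>.\<close>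

lemma mixture_Delta_identity:
  fixes p r ui uj uk vi vj vk fi fj fk dij dik djk dijk :: real
  assumes "p + r = 1"
    and fi: "fi = p*ui + r*vi" and fj: "fj = p*uj + r*vj" and fk: "fk = p*uk + r*vk"
    and dij: "dij = p*ui*uj + r*vi*vj - fi*fj"
    and dik: "dik = p*ui*uk + r*vi*vk - fi*fk"
    and djk: "djk = p*uj*uk + r*vj*vk - fj*fk"
    and dijk: "dijk = (p*ui*uj*uk + r*vi*vj*vk) - (fi*fj*fk + fi*djk + fj*dik + fk*dij)"
  shows "dij*dik*djk = p*r*(dijk^2 + 4*dij*dik*djk)"
proof -
  have p: "p = 1 - r" using assms(1) by simp
  have ij: "dij = r*(1-r)*(vi-ui)*(vj-uj)" unfolding dij fi fj p by algebra
  have ik: "dik = r*(1-r)*(vi-ui)*(vk-uk)" unfolding dik fi fk p by algebra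
  have jk: "djk = r*(1-r)*(vj-uj)*(vk-uk)" unfolding djk fj fk p by algebra
  have ijk: "dijk = r*(1-r)*(1-2*r)*((vi-ui)*(vj-uj)*(vk-uk))"
    unfolding dijk ij ik jk unfolding fi fj fk p by algebra
  show ?thesis unfolding ij ik jk ijk p by algebra
qed

lemma quadratic_with_root_sum_one:
  fixes a p r z :: "'a :: {comm_ring_1, ring_no_zero_divisors}"
  assumes "a \<noteq> 0" and "p + r = 1" and "a * z^2 - a * z + a * (p * r) = 0"
  shows "z = p \<or> z = r"
proof -
  have "a * ((z - p) * (z - r)) = a * z^2 - a * z * (p + r) + a * (p * r)"
    by (simp add: algebra_simps power2_eq_square)
  with assms have "a * ((z - p) * (z - r)) = 0" by simp
  with \<open>a \<noteq> 0\<close> show ?thesis by simp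
qed

lemma sum_mult_eq_of_uncorrelated:
  fixes x y w :: "'i \<Rightarrow> real"
  assumes "(\<Sum>q\<in>A. (x q - a) * (y q - b) * w q) = 0"
    and "(\<Sum>q\<in>A. x q * w q) = N * a" and "(\<Sum>q\<in>A. y q * w q) = N * b" and "(\<Sum>q\<in>A. w q) = N"
  shows "(\<Sum>q\<in>A. x q * y q * w q) = N * a * b"
proof -
  have "(\<Sum>q\<in>A. (x q - a) * (y q - b) * w q)
      = (\<Sum>q\<in>A. x q * y q * w q - a * (y q * w q) - b * (x q * w q) + a * b * w q)"
    by (rule sum.cong) (auto simp: algebra_simps)
  also have "\<dots> = (\<Sum>q\<in>A. x q * y q * w q) - a * (\<Sum>q\<in>A. y q * w q)
      - b * (\<Sum>q\<in>A. x q * w q) + a * b * (\<Sum>q\<in>A. w q)"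
    by (simp add: sum.distrib sum_subtractf sum_distrib_left)
  finally show ?thesis using assms by (simp add: algebra_simps)
qed

lemma sum_mult3_eq_of_uncorrelated:
  fixes x y z w :: "'i \<Rightarrow> real"
  assumes "(\<Sum>q\<in>A. (x q - a) * (y q - b) * (z q - c) * w q) = 0"
    and "(\<Sum>q\<in>A. x q * w q) = N * a" and "(\<Sum>q\<in>A. y q * w q) = N * b"
    and "(\<Sum>q\<in>A. z q * w q) = N * c" and "(\<Sum>q\<in>A. w q) = N"
    and "(\<Sum>q\<in>A. x q * y q * w q) = N * a * b" and "(\<Sum>q\<in>A. x q * z q * w q) = N * a * c"
    and "(\<Sum>q\<in>A. y q * z q * w q) = N * b * c"
  shows "(\<Sum>q\<in>A. x q * y q * z q * w q) = N * a * b * c"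
proof -
  have "(\<Sum>q\<in>A. (x q - a) * (y q - b) * (z q - c) * w q)
      = (\<Sum>q\<in>A. x q * y q * z q * w q - a * (y q * z q * w q) - b * (x q * z q * w q)
          - c * (x q * y q * w q) + a * b * (z q * w q) + a * c * (y q * w q)
          + b * c * (x q * w q) - a * b * c * w q)"
    by (rule sum.cong) (auto simp: algebra_simps)
  also have "\<dots> = (\<Sum>q\<in>A. x q * y q * z q * w q) - a * (\<Sum>q\<in>A. y q * z q * w q)
      - b * (\<Sum>q\<in>A. x q * z q * w q) - c * (\<Sum>q\<in>A. x q * y q * w q)
      + a * b * (\<Sum>q\<in>A. z q * w q) + a * c * (\<Sum>q\<in>A. y q * w q)
      + b * c * (\<Sum>q\<in>A. x q * w q) - a * b * c * (\<Sum>q\<in>A. w q)"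
    by (simp add: sum.distrib sum_subtractf sum_distrib_left)
  finally show ?thesis using assms by (simp add: algebra_simps)
qed

lemma lbl_neq_Lb_iff: "x \<noteq> Lb \<longleftrightarrow> x = La"
  by (cases x) simp_all

lemma real_card_eq_sum_ind: "real (card {q::nat. q < Q \<and> P q}) = (\<Sum>q<Q. ind (P q))"
proof -
  have "(\<Sum>q<Q. ind (P q)) = (\<Sum>q\<in>{q\<in>{..<Q}. P q}. 1)"
    by (subst sum.inter_filter) (simp_all add: ind_def)
  also have "{q\<in>{..<Q}. P q} = {q. q < Q \<and> P q}" by auto
  finally show ?thesis by simp
qed

lemma real_Qcnt_eq_sum: "real (Qcnt Q t l) = (\<Sum>q<Q. ind (t q = l))"
  by (simp add: Qcnt_def real_card_eq_sum_ind)

lemma sum_split_by_label: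
  "(\<Sum>q<Q. g q) = (\<Sum>q<Q. g q * ind (t q = La)) + (\<Sum>q<Q. g q * ind (t q = Lb))"
proof -
  have "(\<Sum>q<Q. g q) = (\<Sum>q<Q. g q * ind (t q = La) + g q * ind (t q = Lb))"
    by (rule sum.cong) (simp_all add: ind_def lbl_neq_Lb_iff)
  then show ?thesis by (simp add: sum.distrib)
qed

lemma sum_as_label_mixture:
  assumes "Qcnt Q t La > 0" and "Qcnt Q t Lb > 0"
  shows "(\<Sum>q<Q. g q) / Q
    = prev Q t La * ((\<Sum>q<Q. g q * ind (t q = La)) / Qcnt Q t La)
      + prev Q t Lb * ((\<Sum>q<Q. g q * ind (t q = Lb)) / Qcnt Q t Lb)"
  using assms by (subst sum_split_by_label[where t = t]) (simp add: prev_def add_divide_distrib)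

lemma Qcnt_pos_imp_pos: "Qcnt Q t l > 0 \<Longrightarrow> Q > 0"
  by (cases Q) (simp_all add: Qcnt_def)

lemma prev_La_add_prev_Lb:
  assumes "Q > 0"
  shows "prev Q t La + prev Q t Lb = 1"
proof -
  have "real Q = real (Qcnt Q t La) + real (Qcnt Q t Lb)"
    using sum_split_by_label[of "\<lambda>_. 1" Q t] by (simp add: real_Qcnt_eq_sum)
  with assms show ?thesis by (simp add: prev_def flip: add_divide_distrib)
qed

lemma prev_in_Rats: "prev Q t l \<in> \<rat>"
  by (simp add: prev_def Rats_divide)

definition bvote :: "(clf \<Rightarrow> nat \<Rightarrow> lbl) \<Rightarrow> clf \<Rightarrow> nat \<Rightarrow> real" where
  "bvote L c q = ind (L c q = Lb)"

definition brate :: "nat \<Rightarrow> (nat \<Rightarrow> lbl) \<Rightarrow> (clf \<Rightarrow> nat \<Rightarrow> lbl) \<Rightarrow> clf \<Rightarrow> lbl \<Rightarrow> real" where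
  "brate Q t L c l = (\<Sum>q<Q. bvote L c q * ind (t q = l)) / real (Qcnt Q t l)"

lemma sum_bvote_within_label:
  assumes "Qcnt Q t l > 0"
  shows "(\<Sum>q<Q. bvote L c q * ind (t q = l)) = real (Qcnt Q t l) * brate Q t L c l"
  using assms by (simp add: brate_def)

text \<open>Accuracy on label \<open>a\<close> is one minus the b-vote rate, whence the sign.\<close>

lemma ind_label_minus_acc:
  assumes "Qcnt Q t l > 0"
  shows "ind (L c q = l) - acc Q t L c l
    = (if l = Lb then 1 else -1) * (bvote L c q - brate Q t L c l)"
proof (cases l)
  case La
  have "real (card {q. q < Q \<and> L c q = La \<and> t q = La})
      = (\<Sum>q<Q. ind (t q = La) - bvote L c q * ind (t q = La))"
    unfolding real_card_eq_sum_ind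
    by (rule sum.cong) (auto simp: ind_def bvote_def lbl_neq_Lb_iff)
  also have "\<dots> = real (Qcnt Q t La) - real (Qcnt Q t La) * brate Q t L c La"
    using assms La by (simp add: sum_subtractf sum_bvote_within_label flip: real_Qcnt_eq_sum)
  finally have "acc Q t L c La = 1 - brate Q t L c La"
    using assms La by (simp add: acc_def field_simps)
  then show ?thesis using La by (cases "L c q") (simp_all add: bvote_def ind_def)
next
  case Lb
  have "real (card {q. q < Q \<and> L c q = Lb \<and> t q = Lb}) = (\<Sum>q<Q. bvote L c q * ind (t q = Lb))"
    unfolding real_card_eq_sum_ind by (rule sum.cong) (simp_all add: bvote_def ind_def)
  then show ?thesis using Lb by (simp add: acc_def brate_def ind_def bvote_def)
qed

lemma centered_bvote_sum2_eq_zero: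
  assumes "error_independent Q t L" and "Qcnt Q t l > 0" and "c \<noteq> d"
  shows "(\<Sum>q<Q. (bvote L c q - brate Q t L c l) * (bvote L d q - brate Q t L d l)
           * ind (t q = l)) = 0"
proof -
  have "Gamma2 Q t L c d l = 0"
    using assms(1,3) by (simp add: error_independent_def)
  with assms(2) show ?thesis
    by (cases l) (simp_all add: Gamma2_def ind_label_minus_acc del: minus_diff_eq)
qed

lemma centered_bvote_sum3_eq_zero:
  assumes "error_independent Q t L" and "Qcnt Q t l > 0"
  shows "(\<Sum>q<Q. (bvote L Ci q - brate Q t L Ci l) * (bvote L Cj q - brate Q t L Cj l)
           * (bvote L Ck q - brate Q t L Ck l) * ind (t q = l)) = 0"
proof -
  have "Gamma3 Q t L l = 0"
    using assms(1) by (simp add: error_independent_def)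
  with assms(2) show ?thesis
    by (cases l) (simp_all add: Gamma3_def ind_label_minus_acc sum_negf del: minus_diff_eq)
qed

lemma bvote_pair_moment_within_label:
  assumes "error_independent Q t L" and "Qcnt Q t l > 0" and "c \<noteq> d"
  shows "(\<Sum>q<Q. bvote L c q * bvote L d q * ind (t q = l))
    = real (Qcnt Q t l) * brate Q t L c l * brate Q t L d l"
  using assms
  by (intro sum_mult_eq_of_uncorrelated centered_bvote_sum2_eq_zero)
    (simp_all add: sum_bvote_within_label real_Qcnt_eq_sum)

lemma bvote_triple_moment_within_label:
  assumes "error_independent Q t L" and "Qcnt Q t l > 0"
  shows "(\<Sum>q<Q. bvote L Ci q * bvote L Cj q * bvote L Ck q * ind (t q = l))
    = real (Qcnt Q t l) * brate Q t L Ci l * brate Q t L Cj l * brate Q t L Ck l"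
  using assms
  by (intro sum_mult3_eq_of_uncorrelated centered_bvote_sum3_eq_zero)
    (simp_all add: sum_bvote_within_label real_Qcnt_eq_sum bvote_pair_moment_within_label)

lemma freq_eq_sum: "freq Q L x y z = (\<Sum>q<Q. ind (L Ci q = x \<and> L Cj q = y \<and> L Ck q = z)) / Q"
  by (simp add: freq_def real_card_eq_sum_ind)

lemma frequencies_as_bvote_moments:
  "fbi Q L = (\<Sum>q<Q. bvote L Ci q) / Q"
  "fbj Q L = (\<Sum>q<Q. bvote L Cj q) / Q"
  "fbk Q L = (\<Sum>q<Q. bvote L Ck q) / Q"
  "freq Q L Lb Lb La + freq Q L Lb Lb Lb = (\<Sum>q<Q. bvote L Ci q * bvote L Cj q) / Q"
  "freq Q L Lb La Lb + freq Q L Lb Lb Lb = (\<Sum>q<Q. bvote L Ci q * bvote L Ck q) / Q"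
  "freq Q L La Lb Lb + freq Q L Lb Lb Lb = (\<Sum>q<Q. bvote L Cj q * bvote L Ck q) / Q"
  "freq Q L Lb Lb Lb = (\<Sum>q<Q. bvote L Ci q * bvote L Cj q * bvote L Ck q) / Q"
  unfolding fbi_def fbj_def fbk_def freq_eq_sum add_divide_distrib[symmetric] sum.distrib[symmetric]
  by ((intro arg_cong[where f = "\<lambda>s. s / real Q"] sum.cong refl;
       auto simp: bvote_def ind_def lbl_neq_Lb_iff)+)

lemma gamma_eq_prev_mult_alpha:
  assumes "error_independent Q t L" and "Qcnt Q t La > 0" and "Qcnt Q t Lb > 0"
  shows "gamma Q L = prev Q t La * prev Q t Lb * alpha Q L"
proof -
  have "Q > 0" using assms(2) by (rule Qcnt_pos_imp_pos)
  define u where "u c = brate Q t L c La" for c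
  define v where "v c = brate Q t L c Lb" for c
  note mixture = sum_as_label_mixture[OF assms(2,3)]
  have first: "(\<Sum>q<Q. bvote L c q) / Q = prev Q t La * u c + prev Q t Lb * v c" for c
    by (simp add: mixture u_def v_def brate_def)
  have second: "(\<Sum>q<Q. bvote L c q * bvote L d q) / Q
      = prev Q t La * u c * u d + prev Q t Lb * v c * v d" if "c \<noteq> d" for c d
    using assms that by (simp add: mixture u_def v_def bvote_pair_moment_within_label)
  have third: "(\<Sum>q<Q. bvote L Ci q * bvote L Cj q * bvote L Ck q) / Q
      = prev Q t La * u Ci * u Cj * u Ck + prev Q t Lb * v Ci * v Cj * v Ck"
    using assms by (simp add: mixture u_def v_def bvote_triple_moment_within_label)
  have pair_ij: "freq Q L Lb Lb La + freq Q L Lb Lb Lb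
      = prev Q t La * u Ci * u Cj + prev Q t Lb * v Ci * v Cj"
    unfolding frequencies_as_bvote_moments(4) by (simp add: second)
  have pair_ik: "freq Q L Lb La Lb + freq Q L Lb Lb Lb
      = prev Q t La * u Ci * u Ck + prev Q t Lb * v Ci * v Ck"
    unfolding frequencies_as_bvote_moments(5) by (simp add: second)
  have pair_jk: "freq Q L La Lb Lb + freq Q L Lb Lb Lb
      = prev Q t La * u Cj * u Ck + prev Q t Lb * v Cj * v Ck"
    unfolding frequencies_as_bvote_moments(6) by (simp add: second)
  show ?thesis
    unfolding gamma_def alpha_def Dij_def Dik_def Djk_def Dijk_def pair_ij pair_ik pair_jk
    by (rule mixture_Delta_identity[OF prev_La_add_prev_Lb[OF \<open>Q > 0\<close>],
          where ui = "u Ci" and uj = "u Cj" and uk = "u Ck" and vi = "v Ci" and vj = "v Cj"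
            and vk = "v Ck" and fi = "fbi Q L" and fj = "fbj Q L" and fk = "fbk Q L"])
      (simp_all add: frequencies_as_bvote_moments first third)
qed

theorem theorem3:
  fixes Q :: nat and t :: "nat \<Rightarrow> lbl" and L :: "clf \<Rightarrow> nat \<Rightarrow> lbl"
  assumes "Qcnt Q t La \<ge> 1" and "Qcnt Q t Lb \<ge> 1"
    and "error_independent Q t L"
    and "alpha Q L \<noteq> 0 \<or> gamma Q L \<noteq> 0"
  shows "\<forall>z::complex. of_real (alpha Q L) * z^2 - of_real (alpha Q L) * z + of_real (gamma Q L) = 0
           \<longrightarrow> z \<in> \<rat>"
proof (intro allI impI)
  fix z :: complex
  assume root: "of_real (alpha Q L) * z^2 - of_real (alpha Q L) * z + of_real (gamma Q L) = 0"
  have gamma_factor: "gamma Q L = prev Q t La * prev Q t Lb * alpha Q L"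
    using assms(1-3) by (intro gamma_eq_prev_mult_alpha) auto
  with assms(4) have "alpha Q L \<noteq> 0" by auto
  moreover have "of_real (prev Q t La) + of_real (prev Q t Lb) = (1 :: complex)"
    using assms(1) Qcnt_pos_imp_pos[of Q t La]
    by (simp flip: of_real_add add: prev_La_add_prev_Lb)
  ultimately have "z = of_real (prev Q t La) \<or> z = of_real (prev Q t Lb)"
    using root by (intro quadratic_with_root_sum_one[where a = "of_real (alpha Q L)"])
      (simp_all add: gamma_factor algebra_simps)
  then show "z \<in> \<rat>" using prev_in_Rats by auto
qed

end
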